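(* Let $m\ge 1$, $N=2^m$, let $\mathcal{A}\subseteq[0,N-1]$ with complement $\mathcal{A}^c=[0,N-1]\setminus\mathcal{A}$, and let $\mathbf{P}\in\mathbb{F}_2^{N\times N}$ be upper triangular with all diagonal entries equal to $1$. Then $$\mathcal{C}_{\mathbf{P}\boldsymbol{G}_N}(\mathcal{A})^{\perp}=\mathcal{C}_{(\mathbf{P}^{t})^{-1}\boldsymbol{G}_N\mathbf{Q}_{\pi}\boldsymbol{G}_N}(\mathcal{A}^c).$$
   Context: $[\ell,u]=\{\ell,\ell+1,\dots,u\}$. $\boldsymbol{G}_N=\begin{pmatrix}1&0\\1&1\end{pmatrix}^{\otimes m}$ over $\mathbb{F}_2$, rows and columns indexed by $0,\dots,N-1$. For a matrix $\mathbf{B}\in\mathbb{F}_2^{N\times N}$ and a set $\mathcal{S}\subseteq[0,N-1]$, $\mathcal{C}_{\mathbf{B}}(\mathcal{S})$ denotes the binary linear code spanned by the rows of $\mathbf{B}$ with indices in $\mathcal{S}$. The code $\mathcal{C}_{\mathbf{P}\boldsymbol{G}_N}(\mathcal{A})$ with $\mathbf{P}$ upper triangular with unit diagonal is called an upper polynomial polar code. $\mathbf{Q}_{\pi}$ is the $N\times N$ permutation matrix of the permutation $\pi$ of $[0,N-1]$ swapping $i$ and $N-1-i$ for every $i$. $\perp$ denotes the dual code with respect to the standard inner product $\boldsymbol{v}\cdot\boldsymbol{w}=\sum_i v_iw_i$ over $\mathbb{F}_2$; $\mathbf{P}^t$ is the transpose. *)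

theory Defs
  imports "HOL-Library.Z2" "Jordan_Normal_Form.Matrix"
begin

definition kron_mat :: "'a::times mat \<Rightarrow> 'a mat \<Rightarrow> 'a mat" where
  "kron_mat A B = mat (dim_row A * dim_row B) (dim_col A * dim_col B)
     (\<lambda>(i,j). A $$ (i div dim_row B, j div dim_col B) * B $$ (i mod dim_row B, j mod dim_col B))"

fun kron_pow :: "'a::{zero,one,times} mat \<Rightarrow> nat \<Rightarrow> 'a mat" where
  "kron_pow A 0 = 1\<^sub>m 1"
| "kron_pow A (Suc m) = kron_mat A (kron_pow A m)"

definition F2_kernel :: "bit mat" where
  "F2_kernel = mat 2 2 (\<lambda>(i,j). if j \<le> i then 1 else 0)"

definition G_mat :: "nat \<Rightarrow> bit mat" where
  "G_mat m = kron_pow F2_kernel m"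

definition Q_rev :: "nat \<Rightarrow> bit mat" where
  "Q_rev N = mat N N (\<lambda>(i,j). if j = N - 1 - i then 1 else 0)"

definition inv_mat :: "'a::semiring_1 mat \<Rightarrow> 'a mat" where
  "inv_mat A = (THE B. inverts_mat A B \<and> inverts_mat B A)"

definition row_code :: "bit mat \<Rightarrow> nat set \<Rightarrow> bit vec set" where
  "row_code B S = {v \<in> carrier_vec (dim_col B).
      \<exists>c::nat \<Rightarrow> bit. \<forall>j < dim_col B. v $ j = (\<Sum>i\<in>S. c i * B $$ (i, j))}"

definition dual_code :: "nat \<Rightarrow> bit vec set \<Rightarrow> bit vec set" where
  "dual_code n C = {v \<in> carrier_vec n. \<forall>w \<in> C. v \<bullet> w = 0}"

end

theory Submission
  imports Defs "Jordan_Normal_Form.Determinant"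
begin

(* Over F_2 the kernel F = [[1,0],[1,1]] is an involution and F Q_2 F = F^t; by the mixed-product
   rule for Kronecker products, and since Q_N = Q_2^{\<otimes>m}, the same holds for G_N.  Hence the
   generator matrix M = (P^t)^-1 G_N Q_N G_N equals (P^t)^-1 G_N^t, and B = P G_N satisfies
   B M^t = P G_N G_N P^-1 = I: the rows of M are the dual basis of the rows of B.  For any pair of
   dual bases, a vector is orthogonal to the rows of B indexed by A exactly when its coordinates
   in the basis M vanish on A, i.e. when it is spanned by the rows of M indexed by the complement. *)

lemma sum_lessThan_mult_div_mod:
  fixes f :: "nat \<Rightarrow> nat \<Rightarrow> 'a::comm_monoid_add"
  shows "(\<Sum>k<b*q. f (k div q) (k mod q)) = (\<Sum>x<b. \<Sum>y<q. f x y)"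
proof (cases "q = 0")
  case False
  let ?g = "\<lambda>k. f (k div q) (k mod q)"
  have "(\<Sum>k<b*q. ?g k) = (\<Sum>x<b. sum ?g {x*q..<x*q+q})"
    by (rule sum.nat_group[symmetric])
  also have "\<dots> = (\<Sum>x<b. \<Sum>y<q. f x y)"
  proof (rule sum.cong[OF refl])
    fix x
    have "sum ?g {x*q..<x*q+q} = (\<Sum>y\<in>{0..<q}. ?g (y + x*q))"
      using sum.shift_bounds_nat_ivl[of ?g 0 "x*q" q] by (simp add: add.commute)
    also have "\<dots> = (\<Sum>y<q. f x y)"
      using False by (simp add: atLeast0LessThan)
    finally show "sum ?g {x*q..<x*q+q} = (\<Sum>y<q. f x y)" .
  qed
  finally show ?thesis .
qed simp

lemma index_mult_mat_sum:
  assumes "A \<in> carrier_mat n k" "B \<in> carrier_mat k l" "i < n" "j < l"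
  shows "(A * B) $$ (i,j) = (\<Sum>t<k. A $$ (i,t) * B $$ (t,j))"
  using assms by (auto simp: scalar_prod_def atLeast0LessThan intro!: sum.cong)

lemma kron_mat_carrier:
  "A \<in> carrier_mat a b \<Longrightarrow> B \<in> carrier_mat p q \<Longrightarrow> kron_mat A B \<in> carrier_mat (a*p) (b*q)"
  by (simp add: kron_mat_def)

lemma index_kron_mat:
  assumes "A \<in> carrier_mat a b" "B \<in> carrier_mat p q" "i < a*p" "j < b*q"
  shows "kron_mat A B $$ (i,j) = A $$ (i div p, j div q) * B $$ (i mod p, j mod q)"
  using assms by (simp add: kron_mat_def)

lemma div_mod_less_mult:
  assumes "(i::nat) < a * p"
  shows "i div p < a" "i mod p < p"
proof -
  have "p > 0" using assms by (cases p) auto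
  then show "i div p < a" "i mod p < p" using assms by (auto simp: less_mult_imp_div_less)
qed

lemma kron_mat_mult:
  fixes A C :: "'a::comm_semiring_1 mat"
  assumes A: "A \<in> carrier_mat a b" and C: "C \<in> carrier_mat b c"
    and B: "B \<in> carrier_mat p q" and D: "D \<in> carrier_mat q r"
  shows "kron_mat A B * kron_mat C D = kron_mat (A * C) (B * D)"
proof (rule eq_matI)
  fix i j
  assume "i < dim_row (kron_mat (A * C) (B * D))" "j < dim_col (kron_mat (A * C) (B * D))"
  then have i: "i < a*p" and j: "j < c*r" using assms by (auto simp: kron_mat_def)
  note ip = div_mod_less_mult[OF i] and jr = div_mod_less_mult[OF j]
  have "(kron_mat A B * kron_mat C D) $$ (i,j) =
      (\<Sum>t<b*q. (A $$ (i div p, t div q) * B $$ (i mod p, t mod q)) *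
                 (C $$ (t div q, j div r) * D $$ (t mod q, j mod r)))"
    using index_kron_mat[OF A B i] index_kron_mat[OF C D _ j]
    by (simp add: index_mult_mat_sum[OF kron_mat_carrier[OF A B] kron_mat_carrier[OF C D] i j])
  also have "\<dots> = (\<Sum>x<b. \<Sum>y<q. (A $$ (i div p, x) * B $$ (i mod p, y)) *
                                    (C $$ (x, j div r) * D $$ (y, j mod r)))"
    by (rule sum_lessThan_mult_div_mod)
  also have "\<dots> = (\<Sum>x<b. A $$ (i div p, x) * C $$ (x, j div r)) *
                  (\<Sum>y<q. B $$ (i mod p, y) * D $$ (y, j mod r))"
    by (simp add: sum_product mult_ac)
  also have "\<dots> = kron_mat (A * C) (B * D) $$ (i,j)"
    using index_kron_mat[OF mult_carrier_mat[OF A C] mult_carrier_mat[OF B D] i j]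
      index_mult_mat_sum[OF A C ip(1) jr(1)] index_mult_mat_sum[OF B D ip(2) jr(2)] by simp
  finally show "(kron_mat A B * kron_mat C D) $$ (i,j) = kron_mat (A * C) (B * D) $$ (i,j)" .
qed (use assms in \<open>simp_all add: kron_mat_def\<close>)

lemma transpose_kron_mat:
  assumes "A \<in> carrier_mat a b" "B \<in> carrier_mat p q"
  shows "transpose_mat (kron_mat A B) = kron_mat (transpose_mat A) (transpose_mat B)"
proof (rule eq_matI)
  fix i j
  assume "i < dim_row (kron_mat (transpose_mat A) (transpose_mat B))"
    "j < dim_col (kron_mat (transpose_mat A) (transpose_mat B))"
  then have "i < b*q" "j < a*p" using assms by (auto simp: kron_mat_def)
  then show "transpose_mat (kron_mat A B) $$ (i,j) =
      kron_mat (transpose_mat A) (transpose_mat B) $$ (i,j)"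
    using assms div_mod_less_mult by (auto simp: kron_mat_def)
qed (use assms in \<open>simp_all add: kron_mat_def\<close>)

lemma kron_mat_one: "kron_mat (1\<^sub>m a) (1\<^sub>m b) = (1\<^sub>m (a*b) :: 'a::semiring_1 mat)"
proof (rule eq_matI)
  fix i j assume "i < dim_row (1\<^sub>m (a*b) :: 'a mat)" "j < dim_col (1\<^sub>m (a*b) :: 'a mat)"
  then have i: "i < a*b" and j: "j < a*b" by auto
  have "(i div b = j div b \<and> i mod b = j mod b) = (i = j)"
    by (metis div_mult_mod_eq)
  then show "kron_mat (1\<^sub>m a) (1\<^sub>m b) $$ (i, j) = (1\<^sub>m (a*b) :: 'a mat) $$ (i, j)"
    using i j div_mod_less_mult[OF i] div_mod_less_mult[OF j] by (auto simp: kron_mat_def)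
qed (auto simp: kron_mat_def)

lemma kron_pow_carrier:
  "A \<in> carrier_mat n n \<Longrightarrow> kron_pow A m \<in> carrier_mat (n^m) (n^m)"
  by (induction m) (auto intro: kron_mat_carrier)

lemma kron_pow_mult:
  fixes A C :: "'a::comm_semiring_1 mat"
  assumes A: "A \<in> carrier_mat n n" and C: "C \<in> carrier_mat n n"
  shows "kron_pow A m * kron_pow C m = kron_pow (A * C) m"
  by (induction m) (simp_all add: kron_mat_mult[OF A C kron_pow_carrier[OF A] kron_pow_carrier[OF C]])

lemma transpose_kron_pow:
  "A \<in> carrier_mat n n \<Longrightarrow> transpose_mat (kron_pow A m) = kron_pow (transpose_mat A) m"
  by (induction m) (simp_all add: transpose_kron_mat[OF _ kron_pow_carrier])

lemma kron_pow_one: "kron_pow (1\<^sub>m n :: 'a::semiring_1 mat) m = 1\<^sub>m (n^m)"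
  by (induction m) (simp_all add: kron_mat_one)

lemma F2_kernel_carrier: "F2_kernel \<in> carrier_mat 2 2"
  by (simp add: F2_kernel_def)

lemma Q_rev_carrier: "Q_rev n \<in> carrier_mat n n"
  by (simp add: Q_rev_def)

lemma F2_kernel_mult_self: "F2_kernel * F2_kernel = 1\<^sub>m 2"
  by (rule eq_matI)
    (auto simp: F2_kernel_def scalar_prod_def numeral_2_eq_2 less_Suc_eq)

lemma F2_kernel_Q_rev_F2_kernel: "F2_kernel * Q_rev 2 * F2_kernel = transpose_mat F2_kernel"
  by (rule eq_matI)
    (auto simp: F2_kernel_def Q_rev_def scalar_prod_def numeral_2_eq_2 less_Suc_eq)

lemma reverse_index_div_mod:
  assumes i: "i < 2*n" and j: "(j::nat) < 2*n"
  shows "(j = 2*n - 1 - i) \<longleftrightarrow> j div n = 1 - i div n \<and> j mod n = n - 1 - i mod n"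
proof -
  have n: "n > 0" using i by simp
  have low: "x div n = 0 \<and> x mod n = x" if "x < n" for x
    using that by simp
  have high: "x div n = 1 \<and> x mod n = x - n" if "n \<le> x" "x < 2*n" for x
    using that n by (simp add: le_div_geq le_mod_geq)
  show ?thesis
    using low[of i] low[of j] high[of i] high[of j] i j by (cases "i < n"; cases "j < n") auto
qed

lemma Q_rev_eq_kron_pow: "Q_rev (2^m) = kron_pow (Q_rev 2) m"
proof (induction m)
  case 0
  then show ?case by (auto simp: Q_rev_def)
next
  case (Suc m)
  let ?n = "2^m :: nat"
  have "Q_rev (2 * ?n) = kron_mat (Q_rev 2) (Q_rev ?n)"
  proof (rule eq_matI)
    fix i j
    assume "i < dim_row (kron_mat (Q_rev 2) (Q_rev ?n))" "j < dim_col (kron_mat (Q_rev 2) (Q_rev ?n))"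
    then have i: "i < 2*?n" and j: "j < 2*?n" by (auto simp: kron_mat_def Q_rev_def)
    then show "Q_rev (2 * ?n) $$ (i,j) = kron_mat (Q_rev 2) (Q_rev ?n) $$ (i,j)"
      using reverse_index_div_mod[OF i j] div_mod_less_mult[OF i] div_mod_less_mult[OF j]
      by (auto simp: kron_mat_def Q_rev_def)
  qed (auto simp: kron_mat_def Q_rev_def)
  then show ?case using Suc by simp
qed

lemma G_mat_carrier: "G_mat m \<in> carrier_mat (2^m) (2^m)"
  unfolding G_mat_def by (rule kron_pow_carrier[OF F2_kernel_carrier])

lemma G_mat_mult_self: "G_mat m * G_mat m = 1\<^sub>m (2^m)"
  unfolding G_mat_def kron_pow_mult[OF F2_kernel_carrier F2_kernel_carrier] F2_kernel_mult_self
  by (simp add: kron_pow_one)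

lemma G_mat_Q_rev_G_mat: "G_mat m * Q_rev (2^m) * G_mat m = transpose_mat (G_mat m)"
  unfolding G_mat_def Q_rev_eq_kron_pow kron_pow_mult[OF F2_kernel_carrier Q_rev_carrier]
    kron_pow_mult[OF mult_carrier_mat[OF F2_kernel_carrier Q_rev_carrier] F2_kernel_carrier]
    F2_kernel_Q_rev_F2_kernel transpose_kron_pow[OF F2_kernel_carrier] ..

lemma inv_mat_eqI:
  fixes A X :: "'a::field mat"
  assumes A: "A \<in> carrier_mat n n" and X: "X \<in> carrier_mat n n" and AX: "A * X = 1\<^sub>m n"
  shows "inv_mat A = X"
  unfolding inv_mat_def
proof (rule the_equality)
  have "X * A = 1\<^sub>m n" by (rule mat_mult_left_right_inverse[OF A X AX])
  then show "inverts_mat A X \<and> inverts_mat X A"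
    using A X AX by (simp add: inverts_mat_def)
next
  fix Y assume "inverts_mat A Y \<and> inverts_mat Y A"
  then have AY: "A * Y = 1\<^sub>m n" and YA: "Y * A = 1\<^sub>m (dim_row Y)"
    using A by (auto simp: inverts_mat_def)
  have Y: "Y \<in> carrier_mat n n"
    using arg_cong[OF AY, of dim_col] arg_cong[OF YA, of dim_col] A by auto
  have "Y = Y * (A * X)" using AX Y by simp
  also have "\<dots> = (Y * A) * X" using Y A X by simp
  also have "\<dots> = X" using YA Y X by simp
  finally show "Y = X" .
qed

lemma inv_mat_det_nonzero:
  fixes A :: "'a::field mat"
  assumes A: "A \<in> carrier_mat n n" and "det A \<noteq> 0"
  shows "inv_mat A \<in> carrier_mat n n" "A * inv_mat A = 1\<^sub>m n"
proof -
  obtain X where X: "X \<in> carrier_mat n n" and AX: "A * X = 1\<^sub>m n"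
    using det_non_zero_imp_unit[OF assms, of "()"] unfolding Units_def ring_mat_def by auto
  then show "inv_mat A \<in> carrier_mat n n" "A * inv_mat A = 1\<^sub>m n"
    using inv_mat_eqI[OF A X AX] by simp_all
qed

lemma det_unit_upper_triangular:
  assumes "A \<in> carrier_mat n n" "upper_triangular A" "\<forall>i < n. A $$ (i, i) = 1"
  shows "det A = 1"
proof -
  have "diag_mat A = replicate n 1"
    using assms by (intro nth_equalityI) (auto simp: diag_mat_def)
  then show ?thesis using det_upper_triangular[OF assms(2,1)] by simp
qed

lemma index_transpose_mult_mat_vec_supported:
  fixes B :: "'a::comm_semiring_0 mat"
  assumes B: "B \<in> carrier_mat n k" and c: "c \<in> carrier_vec n"
    and S: "S \<subseteq> {..<n}" and supp: "\<forall>i<n. i \<notin> S \<longrightarrow> c $ i = 0" and j: "j < k"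
  shows "(transpose_mat B *\<^sub>v c) $ j = (\<Sum>i\<in>S. c $ i * B $$ (i, j))"
proof -
  have "(transpose_mat B *\<^sub>v c) $ j = (\<Sum>i<n. c $ i * B $$ (i, j))"
    using B c j by (auto simp: scalar_prod_def atLeast0LessThan mult.commute intro: sum.cong)
  also have "\<dots> = (\<Sum>i\<in>S. c $ i * B $$ (i, j))"
    using S supp by (intro sum.mono_neutral_right) auto
  finally show ?thesis .
qed

lemma row_code_eq_transpose_mult_mat_vec:
  assumes B: "B \<in> carrier_mat n k" and S: "S \<subseteq> {..<n}"
  shows "row_code B S =
    {transpose_mat B *\<^sub>v c | c. c \<in> carrier_vec n \<and> (\<forall>i<n. i \<notin> S \<longrightarrow> c $ i = 0)}"
proof (intro equalityI subsetI)
  fix v assume "v \<in> row_code B S"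
  then obtain f where v: "v \<in> carrier_vec k" and vf: "\<forall>j<k. v $ j = (\<Sum>i\<in>S. f i * B $$ (i, j))"
    using B unfolding row_code_def by auto
  define c where "c = vec n (\<lambda>i. if i \<in> S then f i else 0)"
  have c: "c \<in> carrier_vec n" "\<forall>i<n. i \<notin> S \<longrightarrow> c $ i = 0"
    by (simp_all add: c_def)
  have "v = transpose_mat B *\<^sub>v c"
  proof (rule eq_vecI)
    fix j assume "j < dim_vec (transpose_mat B *\<^sub>v c)"
    then have j: "j < k" using B by simp
    have "(\<Sum>i\<in>S. f i * B $$ (i, j)) = (\<Sum>i\<in>S. c $ i * B $$ (i, j))"
      using S by (intro sum.cong) (auto simp: c_def)
    then show "v $ j = (transpose_mat B *\<^sub>v c) $ j"
      using vf j index_transpose_mult_mat_vec_supported[OF B c(1) S c(2) j] by simp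
  qed (use v B in simp)
  with c show "v \<in> {transpose_mat B *\<^sub>v c | c. c \<in> carrier_vec n \<and> (\<forall>i<n. i \<notin> S \<longrightarrow> c $ i = 0)}"
    by blast
next
  fix v assume "v \<in> {transpose_mat B *\<^sub>v c | c. c \<in> carrier_vec n \<and> (\<forall>i<n. i \<notin> S \<longrightarrow> c $ i = 0)}"
  then obtain c where v: "v = transpose_mat B *\<^sub>v c" and c: "c \<in> carrier_vec n"
    and supp: "\<forall>i<n. i \<notin> S \<longrightarrow> c $ i = 0" by blast
  have "v \<in> carrier_vec k" using B c v by auto
  then show "v \<in> row_code B S"
    unfolding row_code_def
    using B v index_transpose_mult_mat_vec_supported[OF B c S supp] by (auto intro!: exI[of _ "($) c"])
qed

lemma row_mem_row_code:
  assumes B: "B \<in> carrier_mat n k" and S: "S \<subseteq> {..<n}" and i: "i \<in> S"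
  shows "row B i \<in> row_code B S"
proof -
  have "row B i = transpose_mat B *\<^sub>v unit_vec n i"
    using B S i by (intro eq_vecI) auto
  then show ?thesis
    unfolding row_code_eq_transpose_mult_mat_vec[OF B S] using S i
    by (auto intro!: exI[of _ "unit_vec n i"])
qed

lemma row_code_orthogonal:
  fixes B M :: "bit mat"
  assumes B: "B \<in> carrier_mat n n" and M: "M \<in> carrier_mat n n"
    and MBt: "M * transpose_mat B = 1\<^sub>m n"
    and S: "S \<subseteq> {..<n}" and T: "T \<subseteq> {..<n}" and disj: "S \<inter> T = {}"
    and v: "v \<in> row_code M T" and w: "w \<in> row_code B S"
  shows "v \<bullet> w = 0"
proof -
  obtain c where v: "v = transpose_mat M *\<^sub>v c" and c: "c \<in> carrier_vec n"
    and c_supp: "\<forall>i<n. i \<notin> T \<longrightarrow> c $ i = 0"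
    using v unfolding row_code_eq_transpose_mult_mat_vec[OF M T] by auto
  obtain d where w: "w = transpose_mat B *\<^sub>v d" and d: "d \<in> carrier_vec n"
    and d_supp: "\<forall>i<n. i \<notin> S \<longrightarrow> d $ i = 0"
    using w unfolding row_code_eq_transpose_mult_mat_vec[OF B S] by auto
  have "v \<bullet> w = c \<bullet> (M *\<^sub>v (transpose_mat B *\<^sub>v d))"
    unfolding v w using M B c d by (intro transpose_vec_mult_scalar) auto
  also have "\<dots> = c \<bullet> d"
    using M B d MBt by (simp flip: assoc_mult_mat_vec)
  also have "\<dots> = 0"
    unfolding scalar_prod_def using d c_supp d_supp disj by (intro sum.neutral ballI) force
  finally show ?thesis .
qed

lemma dual_code_row_code:
  fixes B M :: "bit mat"
  assumes B: "B \<in> carrier_mat n n" and M: "M \<in> carrier_mat n n"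
    and BMt: "B * transpose_mat M = 1\<^sub>m n" and S: "S \<subseteq> {0..<n}"
  shows "dual_code n (row_code B S) = row_code M ({0..<n} - S)"
proof -
  let ?T = "{0..<n} - S"
  have S': "S \<subseteq> {..<n}" and T: "?T \<subseteq> {..<n}" using S by auto
  show ?thesis
  proof (intro equalityI subsetI)
    fix v assume "v \<in> dual_code n (row_code B S)"
    then have v: "v \<in> carrier_vec n" and orth: "\<And>w. w \<in> row_code B S \<Longrightarrow> v \<bullet> w = 0"
      unfolding dual_code_def by auto
    have MtB: "transpose_mat M * B = 1\<^sub>m n"
      using mat_mult_left_right_inverse[OF B _ BMt] M by simp
    have "v = transpose_mat M *\<^sub>v (B *\<^sub>v v)"
      using M B v MtB by (simp flip: assoc_mult_mat_vec)
    moreover have "(B *\<^sub>v v) $ i = 0" if "i \<in> S" for i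
      using that S' B v orth[OF row_mem_row_code[OF B S' that]] comm_scalar_prod[OF v, of "row B i"]
      by auto
    ultimately show "v \<in> row_code M ?T"
      unfolding row_code_eq_transpose_mult_mat_vec[OF M T] using B v
      by (auto intro!: exI[of _ "B *\<^sub>v v"])
  next
    fix v assume v: "v \<in> row_code M ?T"
    have MBt: "M * transpose_mat B = 1\<^sub>m n"
      using arg_cong[OF BMt, of transpose_mat] transpose_mult[OF B, of "transpose_mat M"] M by simp
    have "v \<in> carrier_vec n"
      using v M unfolding row_code_def by auto
    then show "v \<in> dual_code n (row_code B S)"
      unfolding dual_code_def using row_code_orthogonal[OF B M MBt S' T _ v] by auto
  qed
qed

theorem theorem1:
  fixes m N :: nat and A :: "nat set" and P :: "bit mat"
  assumes "m \<ge> 1" and "N = 2 ^ m"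
    and "A \<subseteq> {0..<N}"
    and "P \<in> carrier_mat N N"
    and "upper_triangular P"
    and "\<forall>i < N. P $$ (i, i) = 1"
  shows "dual_code N (row_code (P * G_mat m) A) =
         row_code (inv_mat (transpose_mat P) * G_mat m * Q_rev N * G_mat m) ({0..<N} - A)"
proof -
  note P = \<open>P \<in> carrier_mat N N\<close>
  have G: "G_mat m \<in> carrier_mat N N" using G_mat_carrier \<open>N = 2 ^ m\<close> by simp
  define X where "X = inv_mat (transpose_mat P)"
  have "det (transpose_mat P) = 1"
    using det_transpose[OF P] det_unit_upper_triangular[OF P assms(5,6)] by simp
  then have X: "X \<in> carrier_mat N N" and PtX: "transpose_mat P * X = 1\<^sub>m N"
    using inv_mat_det_nonzero[of "transpose_mat P" N] P unfolding X_def by auto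
  have PXt: "P * transpose_mat X = 1\<^sub>m N"
    using arg_cong[OF mat_mult_left_right_inverse[OF _ X PtX], of transpose_mat] P X
    by (simp add: transpose_mult[OF X, of _ N])
  have M: "X * G_mat m * Q_rev N * G_mat m = X * transpose_mat (G_mat m)"
    using G_mat_Q_rev_G_mat[of m] X G Q_rev_carrier[of N] \<open>N = 2 ^ m\<close>
    by (simp add: assoc_mult_mat[of _ N N _ N _ N])
  have "(P * G_mat m) * transpose_mat (X * transpose_mat (G_mat m)) =
      P * (G_mat m * G_mat m) * transpose_mat X"
    using P G X by (simp add: transpose_mult[OF X, of _ N] assoc_mult_mat[of _ N N _ N _ N])
  also have "\<dots> = 1\<^sub>m N"
    using G_mat_mult_self[of m] \<open>N = 2 ^ m\<close> P PXt by simp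
  finally show ?thesis
    unfolding X_def[symmetric] M using P G X assms(3)
    by (intro dual_code_row_code) auto
qed

end
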